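(* Let $\Lambda=[\mu_1,L_1]\cup[\mu_2,L_2]$ with $0<\mu_1<L_1<\mu_2<L_2$. There exists a real polynomial $\sigma$ of degree $2$ with $\sigma(\Lambda)\subseteq[-1,1]$ such that, for every $n\ge1$, $T_n\circ\sigma$ is the solution of $\max\{p(0):p\in\mathbb{R}_{2n}[X],\ \sup_{\lambda\in\Lambda}|p(\lambda)|\le1\}$, if and only if $L_1-\mu_1=L_2-\mu_2$.
   Context: $\mathbb{R}_N[X]$ is the set of real polynomials of degree at most $N$. $T_n$ is the Chebyshev polynomial of the first kind of degree $n$. *)

theory Defs
  imports "HOL-Computational_Algebra.Polynomial"
begin

fun cheb_T :: "nat \<Rightarrow> real poly" where
  "cheb_T 0 = 1"
| "cheb_T (Suc 0) = [:0, 1:]"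
| "cheb_T (Suc (Suc n)) = smult 2 [:0, 1:] * cheb_T (Suc n) - cheb_T n"

definition feasible :: "real set \<Rightarrow> nat \<Rightarrow> real poly \<Rightarrow> bool" where
  "feasible S N p \<longleftrightarrow> degree p \<le> N \<and> (\<forall>x\<in>S. \<bar>poly p x\<bar> \<le> 1)"

definition solves_max :: "real set \<Rightarrow> nat \<Rightarrow> real poly \<Rightarrow> bool" where
  "solves_max S N p \<longleftrightarrow> feasible S N p \<and> (\<forall>q. feasible S N q \<longrightarrow> poly q 0 \<le> poly p 0)"

end

theory Submission
  imports Defs "HOL-Analysis.Elementary_Topology"
begin

text \<open>
  An optimal polynomial \<open>p\<close> cannot have two zeros \<open>x\<^sub>1 \<noteq> x\<^sub>2\<close> in a gap \<open>(u, v)\<close>,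
  \<open>0 \<le> u\<close>, of a compact set \<open>\<Lambda> \<subseteq> [m, \<infinity>)\<close>, \<open>m > 0\<close>: the factor \<open>d = (X - x\<^sub>1)(X - x\<^sub>2)\<close> of \<open>p\<close> is
  positive on \<open>\<Lambda>\<close> and at \<open>0\<close>, and replacing it by \<open>d - \<epsilon> (X - m)\<close> gives a better feasible
  polynomial. As the zeros of the \<open>T\<^sub>n\<close> become dense in \<open>[-1, 1]\<close>, a quadratic \<open>\<sigma>\<close> for which
  all \<open>T\<^sub>n \<circ> \<sigma>\<close> are optimal may therefore not map any gap of \<open>\<Lambda>\<close> in \<open>[0, \<infinity>)\<close> onto an
  interval of \<open>[-1, 1]\<close>. Applied to \<open>(L\<^sub>1, \<mu>\<^sub>2)\<close> this makes \<open>\<sigma>\<close> symmetric about the midpoint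
  \<open>c\<close> of that gap, and applied to \<open>(0, \<mu>\<^sub>1)\<close> or to the gap between \<open>L\<^sub>2\<close> and the mirror image
  of \<open>\<mu>\<^sub>1\<close> it forces \<open>c - \<mu>\<^sub>1 = L\<^sub>2 - c\<close>.

  Conversely, when the intervals have equal length, the quadratic mapping both of them onto
  \<open>[-1, 1]\<close> makes \<open>T\<^sub>n \<circ> \<sigma>\<close> equioscillate at \<open>2n + 1\<close> positive points. The Lagrange weights
  at \<open>0\<close> for these points alternate in sign, so the interpolation formula for \<open>q(0)\<close> is
  maximised termwise by \<open>T\<^sub>n \<circ> \<sigma>\<close>.
\<close>

section \<open>Chebyshev polynomials\<close>

lemma poly_cheb_T_cos: "poly (cheb_T n) (cos t) = cos (real n * t)"
proof (induction n rule: cheb_T.induct)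
  case (3 n)
  have "cos (real (Suc n) * t + t) + cos (real (Suc n) * t - t) = 2 * cos t * cos (real (Suc n) * t)"
    by (simp add: cos_add cos_diff)
  moreover have "real (Suc n) * t + t = real (Suc (Suc n)) * t" "real (Suc n) * t - t = real n * t"
    by (simp_all add: algebra_simps)
  ultimately show ?case
    using 3 by (simp add: algebra_simps)
qed simp_all

lemma degree_cheb_T_le: "degree (cheb_T n) \<le> n"
proof (induction n rule: cheb_T.induct)
  case (3 n)
  have "degree (smult 2 [:0, 1:] * cheb_T (Suc n)) \<le> Suc (Suc n)"
    using 3 degree_mult_le[of "smult 2 [:0, 1:]" "cheb_T (Suc n)"] by simp
  with 3 show ?case
    by (simp add: degree_diff_le)
qed simp_all

lemma abs_poly_cheb_T_le_1:
  assumes "\<bar>y\<bar> \<le> 1"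
  shows "\<bar>poly (cheb_T n) y\<bar> \<le> 1"
  using poly_cheb_T_cos[of n "arccos y"] assms by simp

lemma poly_cheb_T_node_eq_0:
  assumes "n \<ge> 1"
  shows "poly (cheb_T n) (cos ((2 * real k + 1) * pi / (2 * real n))) = 0"
proof -
  have "real n * ((2 * real k + 1) * pi / (2 * real n)) = real (2 * k + 1) * (pi / 2)"
    using assms by (simp add: field_simps)
  moreover have "cos (real (2 * k + 1) * (pi / 2)) = 0"
    by (subst cos_zero_iff_int) (auto intro!: exI[of _ "int (2 * k + 1)"])
  ultimately show ?thesis
    by (simp only: poly_cheb_T_cos)
qed

lemma exists_consecutive_cheb_nodes_between:
  fixes a b :: real
  assumes "0 \<le> a" "a < b"
  obtains n k :: nat where "n \<ge> 1"
    "a < (2 * real k + 1) * pi / (2 * real n)" "(2 * real k + 3) * pi / (2 * real n) < b"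
proof -
  obtain n :: nat where n: "5 * pi / (2 * (b - a)) < real n"
    using reals_Archimedean2 by blast
  have "0 < 5 * pi / (2 * (b - a))"
    using assms by simp
  with n have n_pos: "0 < real n"
    by linarith
  from n assms have width: "5 * pi < 2 * (b - a) * real n"
    by (simp add: field_simps)
  define j where "j = nat \<lfloor>a * real n / pi\<rfloor>"
  have "0 \<le> a * real n / pi"
    using assms n_pos by simp
  then have "real j \<le> a * real n / pi" "a * real n / pi < real j + 1"
    unfolding j_def by linarith+
  then have j: "real j * pi \<le> a * real n" "a * real n < (real j + 1) * pi"
    by (simp_all add: field_simps)
  show ?thesis
  proof
    show "1 \<le> n"
      using n_pos by simp
    show "a < (2 * real (j + 1) + 1) * pi / (2 * real n)"
      using j n_pos pi_gt_zero by (simp add: field_simps)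
    show "(2 * real (j + 1) + 3) * pi / (2 * real n) < b"
      using j width n_pos by (simp add: field_simps)
  qed
qed

lemma cheb_T_two_roots_between:
  fixes \<alpha> \<beta> :: real
  assumes "-1 \<le> \<alpha>" "\<alpha> < \<beta>" "\<beta> \<le> 1"
  obtains n y1 y2 where "n \<ge> 1" "y1 \<in> {\<alpha><..<\<beta>}" "y2 \<in> {\<alpha><..<\<beta>}" "y1 \<noteq> y2"
    "poly (cheb_T n) y1 = 0" "poly (cheb_T n) y2 = 0"
proof -
  define a b where "a = arccos \<beta>" and "b = arccos \<alpha>"
  have "a < b" "0 \<le> a" "b \<le> pi"
    unfolding a_def b_def using assms by (auto intro: arccos_less_arccos arccos_lbound arccos_ubound)
  then obtain n k :: nat where n: "n \<ge> 1"
    and k: "a < (2 * real k + 1) * pi / (2 * real n)" "(2 * real k + 3) * pi / (2 * real n) < b"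
    using exists_consecutive_cheb_nodes_between by blast
  define t1 t2 where "t1 = (2 * real k + 1) * pi / (2 * real n)"
    and "t2 = (2 * real (k + 1) + 1) * pi / (2 * real n)"
  have "t1 < t2"
    unfolding t1_def t2_def using n by (simp add: divide_strict_right_mono)
  moreover have "a < t1" "t2 < b"
    using k unfolding t1_def t2_def by (simp_all add: algebra_simps)
  ultimately have "cos b < cos t2" "cos t2 < cos t1" "cos t1 < cos a"
    using \<open>0 \<le> a\<close> \<open>b \<le> pi\<close> by (auto intro!: cos_monotone_0_pi)
  moreover have "cos a = \<beta>" "cos b = \<alpha>"
    unfolding a_def b_def using assms by auto
  ultimately have "cos t1 \<in> {\<alpha><..<\<beta>}" "cos t2 \<in> {\<alpha><..<\<beta>}" "cos t1 \<noteq> cos t2"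
    by auto
  moreover have "poly (cheb_T n) (cos t1) = 0" "poly (cheb_T n) (cos t2) = 0"
    unfolding t1_def t2_def by (rule poly_cheb_T_node_eq_0[OF n])+
  ultimately show ?thesis
    using that[OF n] by blast
qed

lemma cos_multiple_pi_div_strict_antimono:
  assumes "k < l" "l \<le> n"
  shows "cos (real l * pi / real n) < cos (real k * pi / real n)"
  using assms by (intro cos_monotone_0_pi) (auto simp: field_simps)

lemma cos_multiple_pi_div_reflect:
  assumes "i \<le> 2 * n" "n \<ge> 1"
  shows "cos (real (2 * n - i) * pi / real n) = cos (real i * pi / real n)"
proof -
  have "real (2 * n - i) * pi / real n = 2 * pi - real i * pi / real n"
    using assms by (simp add: of_nat_diff field_simps)
  then show ?thesis
    by (simp add: cos_diff)
qed

section \<open>Optimal polynomials have no two zeros in a gap\<close>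

lemma feasible_1: "feasible S N 1"
  by (simp add: feasible_def)

lemma solves_max_ge_1: "solves_max S N p \<Longrightarrow> poly p 0 \<ge> 1"
  using feasible_1 unfolding solves_max_def by fastforce

lemma positive_continuous_dominates_linear:
  fixes f :: "real \<Rightarrow> real"
  assumes "compact S" "S \<subseteq> {m..}" "continuous_on S f" "\<forall>x\<in>S. 0 < f x"
  obtains \<epsilon> where "\<epsilon> > 0" "\<forall>x\<in>S. \<epsilon> * (x - m) \<le> f x"
proof (cases "S = {}")
  case False
  obtain x0 where "x0 \<in> S" and x0: "\<forall>x\<in>S. f x0 \<le> f x"
    using continuous_attains_inf[OF \<open>compact S\<close> False \<open>continuous_on S f\<close>] by auto
  obtain M where M: "\<forall>x\<in>S. x \<le> M"
    using continuous_attains_sup[OF \<open>compact S\<close> False, of "\<lambda>x. x"] by auto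
  with False \<open>S \<subseteq> {m..}\<close> have "m \<le> M"
    by force
  show ?thesis
  proof
    show "f x0 / (M - m + 1) > 0"
      using assms(4) \<open>x0 \<in> S\<close> \<open>m \<le> M\<close> by simp
    show "\<forall>x\<in>S. f x0 / (M - m + 1) * (x - m) \<le> f x"
    proof
      fix x assume "x \<in> S"
      have "f x0 / (M - m + 1) * (x - m) \<le> f x0 / (M - m + 1) * (M - m + 1)"
        using M \<open>x \<in> S\<close> assms(4) \<open>x0 \<in> S\<close> \<open>m \<le> M\<close> by (intro mult_left_mono) auto
      also have "\<dots> \<le> f x"
        using x0 \<open>x \<in> S\<close> \<open>m \<le> M\<close> by simp
      finally show "f x0 / (M - m + 1) * (x - m) \<le> f x" .
    qed
  qed
next
  case True
  with that[of 1] show ?thesis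
    by auto
qed

lemma solves_max_no_positive_factor:
  fixes S :: "real set" and m :: real
  assumes sol: "solves_max S N (d * s)" and "compact S" "S \<subseteq> {m..}" "0 < m"
    and d_deg: "degree d \<ge> 1" and d_pos: "\<forall>x\<in>S. poly d x > 0" and "poly d 0 > 0"
  shows False
proof -
  have "poly (d * s) 0 \<ge> 1"
    using sol by (rule solves_max_ge_1)
  then have "poly d 0 * poly s 0 > 0"
    by simp
  with \<open>poly d 0 > 0\<close> have s0: "poly s 0 > 0"
    by (simp add: zero_less_mult_iff)
  then have "d \<noteq> 0" "s \<noteq> 0"
    using \<open>poly (d * s) 0 \<ge> 1\<close> by auto
  have "continuous_on S (poly d)"
    by (intro continuous_intros)
  then obtain \<epsilon> where "\<epsilon> > 0" and \<epsilon>: "\<forall>x\<in>S. \<epsilon> * (x - m) \<le> poly d x"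
    using positive_continuous_dominates_linear[OF \<open>compact S\<close> \<open>S \<subseteq> {m..}\<close> _ d_pos] by blast
  \<comment> \<open>Lowering \<open>d\<close> by \<open>\<epsilon> (x - m)\<close>, which lies in \<open>[0, d(x)]\<close> on \<open>S\<close>, shrinks \<open>|d s|\<close> on \<open>S\<close>
      but raises its value at \<open>0\<close>.\<close>
  define q where "q = (d - smult \<epsilon> [:-m, 1:]) * s"
  have "degree (d - smult \<epsilon> [:-m, 1:]) \<le> degree d"
    using d_deg degree_diff_le_max[of d "smult \<epsilon> [:-m, 1:]"] by simp
  then have "degree q \<le> degree (d * s)"
    unfolding q_def using degree_mult_le[of "d - smult \<epsilon> [:-m, 1:]" s]
      degree_mult_eq[OF \<open>d \<noteq> 0\<close> \<open>s \<noteq> 0\<close>] by linarith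
  moreover have "\<bar>poly q x\<bar> \<le> \<bar>poly (d * s) x\<bar>" if "x \<in> S" for x
  proof -
    have "0 \<le> \<epsilon> * (x - m)"
      using that \<open>S \<subseteq> {m..}\<close> \<open>\<epsilon> > 0\<close> by auto
    with \<epsilon> that have "\<bar>poly d x - \<epsilon> * (x - m)\<bar> \<le> \<bar>poly d x\<bar>"
      by auto
    then have "\<bar>poly d x - \<epsilon> * (x - m)\<bar> * \<bar>poly s x\<bar> \<le> \<bar>poly d x\<bar> * \<bar>poly s x\<bar>"
      by (rule mult_right_mono) simp
    moreover have "poly q x = (poly d x - \<epsilon> * (x - m)) * poly s x"
      unfolding q_def by (simp add: algebra_simps)
    ultimately show ?thesis
      by (simp add: abs_mult)
  qed
  ultimately have "feasible S N q"
    using sol unfolding solves_max_def feasible_def by (meson order.trans)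
  then have "poly q 0 \<le> poly (d * s) 0"
    using sol unfolding solves_max_def by blast
  moreover have "poly q 0 = poly (d * s) 0 + \<epsilon> * m * poly s 0"
    unfolding q_def by (simp add: algebra_simps)
  moreover have "\<epsilon> * m * poly s 0 > 0"
    using \<open>\<epsilon> > 0\<close> \<open>m > 0\<close> s0 by simp
  ultimately show False
    by linarith
qed

lemma solves_max_no_two_roots_in_gap:
  fixes S :: "real set" and m u v x1 x2 :: real
  assumes sol: "solves_max S N p" and "compact S" "S \<subseteq> {m..}" "0 < m"
    and gap: "0 \<le> u" "S \<inter> {u<..<v} = {}"
    and roots: "x1 \<in> {u<..<v}" "x2 \<in> {u<..<v}" "x1 \<noteq> x2" "poly p x1 = 0" "poly p x2 = 0"
  shows False
proof -
  obtain p1 where p1: "p = [:-x1, 1:] * p1"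
    using roots(4) by (auto simp: poly_eq_0_iff_dvd dvd_def)
  with roots have "poly p1 x2 = 0"
    by simp
  then obtain s where "p1 = [:-x2, 1:] * s"
    by (auto simp: poly_eq_0_iff_dvd dvd_def)
  then have factor: "p = ([:-x1, 1:] * [:-x2, 1:]) * s"
    using p1 by (simp only: mult.assoc)
  have "poly ([:-x1, 1:] * [:-x2, 1:]) x > 0" if "x \<le> u \<or> v \<le> x" for x
  proof -
    have "poly ([:-x1, 1:] * [:-x2, 1:]) x = (x - x1) * (x - x2)"
      by (simp add: algebra_simps)
    then show ?thesis
      using that roots(1,2) by (auto intro: mult_pos_pos mult_neg_neg)
  qed
  moreover have "x \<le> u \<or> v \<le> x" if "x \<in> S" for x
    using gap that by auto
  ultimately have positive: "\<forall>x\<in>S. poly ([:-x1, 1:] * [:-x2, 1:]) x > 0"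
    "poly ([:-x1, 1:] * [:-x2, 1:]) 0 > 0"
    using gap by blast+
  show False
    by (rule solves_max_no_positive_factor[OF sol[unfolded factor] assms(2-4)])
      (use positive in \<open>simp_all add: degree_mult_eq\<close>)
qed

lemma cheb_compose_optimal_no_gap_image:
  fixes \<sigma> :: "real poly" and S :: "real set" and m u v \<alpha> \<beta> :: real
  assumes opt: "\<forall>n\<ge>1. solves_max S (2 * n) (pcompose (cheb_T n) \<sigma>)"
    and S: "compact S" "S \<subseteq> {m..}" "0 < m"
    and gap: "0 \<le> u" "S \<inter> {u<..<v} = {}"
    and "-1 \<le> \<alpha>" "\<alpha> < \<beta>" "\<beta> \<le> 1" and image: "{\<alpha><..<\<beta>} \<subseteq> poly \<sigma> ` {u<..<v}"
  shows False
proof -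
  obtain n y1 y2 where n: "n \<ge> 1" and y: "y1 \<in> {\<alpha><..<\<beta>}" "y2 \<in> {\<alpha><..<\<beta>}" "y1 \<noteq> y2"
    and roots: "poly (cheb_T n) y1 = 0" "poly (cheb_T n) y2 = 0"
    using cheb_T_two_roots_between[OF \<open>-1 \<le> \<alpha>\<close> \<open>\<alpha> < \<beta>\<close> \<open>\<beta> \<le> 1\<close>] by blast
  have "y1 \<in> poly \<sigma> ` {u<..<v}" "y2 \<in> poly \<sigma> ` {u<..<v}"
    using image y(1,2) by auto
  then obtain x1 x2 where x: "x1 \<in> {u<..<v}" "x2 \<in> {u<..<v}"
    and "poly \<sigma> x1 = y1" "poly \<sigma> x2 = y2"
    by (auto simp del: greaterThanLessThan_iff)
  with \<open>y1 \<noteq> y2\<close> have "x1 \<noteq> x2"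
    by blast
  show False
    by (rule solves_max_no_two_roots_in_gap[OF opt[rule_format, OF n] S gap x \<open>x1 \<noteq> x2\<close>])
      (simp_all add: poly_pcompose roots \<open>poly \<sigma> x1 = y1\<close> \<open>poly \<sigma> x2 = y2\<close>)
qed

section \<open>Necessity of equal lengths\<close>

lemma poly_image_between:
  fixes p :: "real poly"
  assumes "u < v" "min (poly p u) (poly p v) < y" "y < max (poly p u) (poly p v)"
  shows "y \<in> poly p ` {u<..<v}"
proof -
  have "poly (p - [:y:]) u * poly (p - [:y:]) v < 0"
    using assms(2,3) by (auto simp: mult_less_0_iff)
  then obtain x where "u < x" "x < v" "poly (p - [:y:]) x = 0"
    using poly_IVT[OF assms(1)] by blast
  then show ?thesis
    by auto
qed

lemma degree2_symmetric_form:
  fixes \<sigma> :: "real poly"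
  assumes deg: "degree \<sigma> = 2" and "poly \<sigma> u = poly \<sigma> v" "u \<noteq> v"
  obtains a k where "a \<noteq> 0" "\<And>x. poly \<sigma> x = a * (x - (u + v) / 2)\<^sup>2 + k"
proof -
  define a0 a1 a where "a0 = coeff \<sigma> 0" and "a1 = coeff \<sigma> 1" and "a = coeff \<sigma> 2"
  have \<sigma>_coeffs: "poly \<sigma> x = a0 + a1 * x + a * x\<^sup>2" for x
    unfolding a0_def a1_def a_def by (simp add: poly_altdef deg numeral_2_eq_2)
  have "a \<noteq> 0"
    unfolding a_def using deg by (metis leading_coeff_0_iff zero_neq_numeral degree_0)
  have "(u - v) * (a1 + a * (u + v)) = poly \<sigma> u - poly \<sigma> v"
    by (simp add: \<sigma>_coeffs power2_eq_square algebra_simps)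
  with assms have a1: "a1 = - a * (u + v)"
    by simp
  have "poly \<sigma> x = a * (x - (u + v) / 2)\<^sup>2 + (a0 - a * ((u + v) / 2)\<^sup>2)" for x
    unfolding \<sigma>_coeffs a1 by (simp add: power2_eq_square field_simps)
  with \<open>a \<noteq> 0\<close> show ?thesis
    using that by blast
qed

lemma two_intervals_no_gap_image:
  fixes \<mu>1 L1 \<mu>2 L2 u v \<alpha> \<beta> :: real and \<sigma> :: "real poly"
  assumes "0 < \<mu>1" "\<mu>1 \<le> L1" "L1 \<le> \<mu>2"
    and opt: "\<forall>n\<ge>1. solves_max ({\<mu>1..L1} \<union> {\<mu>2..L2}) (2 * n) (pcompose (cheb_T n) \<sigma>)"
    and "0 \<le> u" "({\<mu>1..L1} \<union> {\<mu>2..L2}) \<inter> {u<..<v} = {}"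
    and "-1 \<le> \<alpha>" "\<alpha> < \<beta>" "\<beta> \<le> 1" "{\<alpha><..<\<beta>} \<subseteq> poly \<sigma> ` {u<..<v}"
  shows False
  by (rule cheb_compose_optimal_no_gap_image[OF opt _ _ \<open>0 < \<mu>1\<close>]) (use assms in auto)

lemma cheb_compose_optimal_symmetric:
  fixes \<mu>1 L1 \<mu>2 L2 :: real and \<sigma> :: "real poly"
  assumes "0 < \<mu>1" "\<mu>1 < L1" "L1 < \<mu>2" "\<mu>2 < L2"
    and deg: "degree \<sigma> = 2"
    and bounded: "poly \<sigma> ` ({\<mu>1..L1} \<union> {\<mu>2..L2}) \<subseteq> {-1..1}"
    and opt: "\<forall>n\<ge>1. solves_max ({\<mu>1..L1} \<union> {\<mu>2..L2}) (2 * n) (pcompose (cheb_T n) \<sigma>)"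
  obtains a k where "a > 0" "\<And>x. poly \<sigma> x = a * (x - (L1 + \<mu>2) / 2)\<^sup>2 + k"
proof -
  have "poly \<sigma> x \<in> {-1..1}" if "x \<in> {\<mu>1..L1} \<union> {\<mu>2..L2}" for x
    using bounded that by blast
  then have "poly \<sigma> L1 \<in> {-1..1}" "poly \<sigma> \<mu>2 \<in> {-1..1}" "poly \<sigma> \<mu>1 \<in> {-1..1}"
    using assms(1-4) by simp_all
  have "poly \<sigma> L1 = poly \<sigma> \<mu>2"
  proof (rule ccontr)
    assume "poly \<sigma> L1 \<noteq> poly \<sigma> \<mu>2"
    then show False
      using assms(1-4) \<open>poly \<sigma> L1 \<in> {-1..1}\<close> \<open>poly \<sigma> \<mu>2 \<in> {-1..1}\<close> poly_image_between[of L1 \<mu>2 \<sigma>]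
      by (intro two_intervals_no_gap_image[OF _ _ _ opt,
            of L1 \<mu>2 "min (poly \<sigma> L1) (poly \<sigma> \<mu>2)" "max (poly \<sigma> L1) (poly \<sigma> \<mu>2)"]) auto
  qed
  define c where "c = (L1 + \<mu>2) / 2"
  obtain a k where "a \<noteq> 0" and \<sigma>_form: "\<And>x. poly \<sigma> x = a * (x - c)\<^sup>2 + k"
    using degree2_symmetric_form[OF deg \<open>poly \<sigma> L1 = poly \<sigma> \<mu>2\<close>] \<open>L1 < \<mu>2\<close>
    unfolding c_def by blast
  moreover have "a > 0"
  proof (rule ccontr)
    assume "\<not> a > 0"
    with \<open>a \<noteq> 0\<close> have "a < 0"
      by simp
    have "\<mu>1 < c"
      using assms(2,3) unfolding c_def by simp
    with \<open>0 < \<mu>1\<close> have "\<bar>\<mu>1 - c\<bar> < \<bar>0 - c\<bar>"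
      by simp
    then have "(\<mu>1 - c)\<^sup>2 < (0 - c)\<^sup>2"
      using abs_le_square_iff not_le by metis
    with \<open>a < 0\<close> have "poly \<sigma> 0 < poly \<sigma> \<mu>1"
      unfolding \<sigma>_form by simp
    moreover have "poly \<sigma> 0 \<ge> 1"
      using solves_max_ge_1 opt[rule_format, of 1] by (simp add: pcompose_pCons)
    ultimately show False
      using \<open>poly \<sigma> \<mu>1 \<in> {-1..1}\<close> by auto
  qed
  ultimately show ?thesis
    using that unfolding c_def by blast
qed

lemma equal_gaps_if_cheb_compose_optimal:
  fixes \<mu>1 L1 \<mu>2 L2 :: real and \<sigma> :: "real poly"
  assumes "0 < \<mu>1" "\<mu>1 < L1" "L1 < \<mu>2" "\<mu>2 < L2"
    and deg: "degree \<sigma> = 2"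
    and bounded: "poly \<sigma> ` ({\<mu>1..L1} \<union> {\<mu>2..L2}) \<subseteq> {-1..1}"
    and opt: "\<forall>n\<ge>1. solves_max ({\<mu>1..L1} \<union> {\<mu>2..L2}) (2 * n) (pcompose (cheb_T n) \<sigma>)"
  shows "L1 - \<mu>1 = L2 - \<mu>2"
proof (rule ccontr)
  assume "L1 - \<mu>1 \<noteq> L2 - \<mu>2"
  define c where "c = (L1 + \<mu>2) / 2"
  obtain a k where "a > 0" and \<sigma>_form: "\<And>x. poly \<sigma> x = a * (x - c)\<^sup>2 + k"
    using cheb_compose_optimal_symmetric[OF assms] unfolding c_def by blast
  have \<sigma>_less: "poly \<sigma> x < poly \<sigma> y" if "\<bar>x - c\<bar> < \<bar>y - c\<bar>" for x y
    using that abs_le_square_iff[of "y - c" "x - c"] \<open>a > 0\<close> unfolding \<sigma>_form by simp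
  have "poly \<sigma> x \<in> {-1..1}" if "x \<in> {\<mu>1..L1} \<union> {\<mu>2..L2}" for x
    using bounded that by blast
  then have "poly \<sigma> L2 \<in> {-1..1}" "poly \<sigma> \<mu>1 \<in> {-1..1}"
    using assms(1-4) by simp_all
  have no_gap_image: False
    if "0 \<le> u" "({\<mu>1..L1} \<union> {\<mu>2..L2}) \<inter> {u<..<v} = {}" "-1 \<le> \<alpha>" "\<alpha> < \<beta>" "\<beta> \<le> 1"
      "{\<alpha><..<\<beta>} \<subseteq> poly \<sigma> ` {u<..<v}" for u v \<alpha> \<beta>
    using assms(1-3) that by (intro two_intervals_no_gap_image[OF _ _ _ opt]) auto
  consider "L2 - \<mu>2 < L1 - \<mu>1" | "L1 - \<mu>1 < L2 - \<mu>2"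
    using \<open>L1 - \<mu>1 \<noteq> L2 - \<mu>2\<close> by linarith
  then show False
  proof cases
    case 1
    \<comment> \<open>the mirror image \<open>v\<close> of \<open>\<mu>1\<close> lies beyond \<open>L2\<close>, and \<open>\<sigma>\<close> maps the gap \<open>(L2, v)\<close>
        onto \<open>(\<sigma> L2, \<sigma> \<mu>1)\<close>\<close>
    define v where "v = 2 * c - \<mu>1"
    have "0 < L2 - c" "L2 - c < c - \<mu>1"
      using 1 assms(1-4) unfolding c_def by (simp_all add: field_simps)
    then have "L2 < v" "poly \<sigma> L2 < poly \<sigma> v"
      unfolding v_def by (simp_all add: \<sigma>_less)
    moreover have "poly \<sigma> v = poly \<sigma> \<mu>1"
      unfolding \<sigma>_form v_def by (simp add: power2_commute)
    ultimately show False
      using assms(1-4) \<open>poly \<sigma> L2 \<in> {-1..1}\<close> \<open>poly \<sigma> \<mu>1 \<in> {-1..1}\<close> poly_image_between[of L2 v \<sigma>]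
      by (intro no_gap_image[of L2 v "poly \<sigma> L2" "poly \<sigma> v"]) auto
  next
    case 2
    have "\<mu>1 < c" "c - \<mu>1 < L2 - c"
      using 2 assms(1-4) unfolding c_def by (simp_all add: field_simps)
    then have "poly \<sigma> \<mu>1 < poly \<sigma> 0" "poly \<sigma> \<mu>1 < poly \<sigma> L2"
      using \<open>0 < \<mu>1\<close> by (auto intro: \<sigma>_less)
    then show False
      using assms(1-4) \<open>poly \<sigma> L2 \<in> {-1..1}\<close> \<open>poly \<sigma> \<mu>1 \<in> {-1..1}\<close> poly_image_between[of 0 \<mu>1 \<sigma>]
      by (intro no_gap_image[of 0 \<mu>1 "poly \<sigma> \<mu>1" "min 1 (poly \<sigma> 0)"]) auto
  qed
qed

section \<open>Optimality of equioscillating polynomials\<close>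

definition lagrange_basis :: "(nat \<Rightarrow> 'a::field) \<Rightarrow> nat \<Rightarrow> nat \<Rightarrow> 'a poly" where
  "lagrange_basis x M i = (\<Prod>j\<in>{0..M}-{i}. [:- x j / (x i - x j), 1 / (x i - x j):])"

lemma poly_lagrange_basis:
  "poly (lagrange_basis x M i) z = (\<Prod>j\<in>{0..M}-{i}. (z - x j) / (x i - x j))"
  unfolding lagrange_basis_def poly_prod by (intro prod.cong) (auto simp: diff_divide_distrib)

lemma degree_lagrange_basis_le:
  assumes "i \<le> M"
  shows "degree (lagrange_basis x M i) \<le> M"
proof -
  have deg1: "degree [:a, b:] \<le> 1" for a b :: 'a
    by simp
  have "degree (lagrange_basis x M i) \<le> (\<Sum>j\<in>{0..M}-{i}. 1)"
    unfolding lagrange_basis_def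
    by (rule order.trans[OF degree_prod_sum_le], simp, rule sum_mono, simp only: o_def deg1)
  with assms show ?thesis
    by simp
qed

lemma poly_lagrange_basis_node:
  assumes "inj_on x {0..M}" "i \<le> M" "k \<le> M"
  shows "poly (lagrange_basis x M i) (x k) = (if k = i then 1 else 0)"
proof (cases "k = i")
  case True
  with assms have "\<forall>j\<in>{0..M}-{i}. x i - x j \<noteq> 0"
    unfolding inj_on_def by auto
  with True show ?thesis
    by (simp add: poly_lagrange_basis)
next
  case False
  with assms have "(\<Prod>j\<in>{0..M}-{i}. (x k - x j) / (x i - x j)) = 0"
    by (intro prod_zero) (auto intro!: bexI[of _ k])
  with False show ?thesis
    by (simp add: poly_lagrange_basis)
qed

lemma lagrange_interpolation:
  fixes x :: "nat \<Rightarrow> 'a::field" and q :: "'a poly"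
  assumes inj: "inj_on x {0..M}" and "degree q \<le> M"
  shows "poly q z = (\<Sum>i=0..M. poly q (x i) * poly (lagrange_basis x M i) z)"
proof -
  define L where "L = (\<Sum>i=0..M. smult (poly q (x i)) (lagrange_basis x M i))"
  have "degree L \<le> M"
    unfolding L_def using degree_lagrange_basis_le
    by (intro degree_sum_le) (auto intro: order.trans[OF degree_smult_le])
  have "poly L (x k) = poly q (x k)" if "k \<le> M" for k
  proof -
    have "poly L (x k) = (\<Sum>i=0..M. poly q (x i) * poly (lagrange_basis x M i) (x k))"
      unfolding L_def by (simp add: poly_sum)
    also have "\<dots> = (\<Sum>i=0..M. if i = k then poly q (x k) else 0)"
      using that poly_lagrange_basis_node[OF inj] by (intro sum.cong) auto
    finally show ?thesis
      using that by simp
  qed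
  then have "L = q"
    using \<open>degree L \<le> M\<close> \<open>degree q \<le> M\<close> card_image[OF inj]
    by (intro poly_eqI_degree[of "x ` {0..M}"]) auto
  then have "poly q z = poly L z"
    by simp
  also have "\<dots> = (\<Sum>i=0..M. poly q (x i) * poly (lagrange_basis x M i) z)"
    unfolding L_def by (simp add: poly_sum)
  finally show ?thesis .
qed

lemma lagrange_basis_at_0_sign:
  fixes x :: "nat \<Rightarrow> real"
  assumes increasing: "\<And>i j. i < j \<Longrightarrow> j \<le> M \<Longrightarrow> x i < x j" and pos: "\<And>i. i \<le> M \<Longrightarrow> 0 < x i"
    and "i \<le> M"
  shows "(-1) ^ i * poly (lagrange_basis x M i) 0 > 0"
proof -
  define f where "f j = (0 - x j) / (x i - x j)" for j
  have split: "{0..M}-{i} = {0..<i} \<union> {i<..M}"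
    using \<open>i \<le> M\<close> by auto
  have "(\<Prod>j\<in>{0..M}-{i}. f j) = (\<Prod>j\<in>{0..<i}. f j) * (\<Prod>j\<in>{i<..M}. f j)"
    unfolding split by (rule prod.union_disjoint) auto
  also have "(\<Prod>j\<in>{0..<i}. f j) = (\<Prod>j\<in>{0..<i}. -1) * (\<Prod>j\<in>{0..<i}. - f j)"
    by (subst prod.distrib[symmetric]) simp
  also have "(\<Prod>j\<in>{0..<i}. -1) = ((-1) ^ i :: real)"
    by simp
  finally have "(-1) ^ i * (\<Prod>j\<in>{0..M}-{i}. f j) = (\<Prod>j\<in>{0..<i}. - f j) * (\<Prod>j\<in>{i<..M}. f j)"
    by (simp add: mult.assoc flip: power_mult_distrib)
  moreover have "(\<Prod>j\<in>{0..<i}. - f j) > 0"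
    using increasing pos \<open>i \<le> M\<close> unfolding f_def by (intro prod_pos) (auto simp: divide_neg_pos)
  moreover have "(\<Prod>j\<in>{i<..M}. f j) > 0"
    using increasing pos unfolding f_def by (intro prod_pos) (auto simp: divide_pos_neg)
  ultimately show ?thesis
    unfolding f_def poly_lagrange_basis by simp
qed

lemma poly_0_le_if_alternation:
  fixes x :: "nat \<Rightarrow> real" and p q :: "real poly"
  assumes increasing: "\<And>i j. i < j \<Longrightarrow> j \<le> M \<Longrightarrow> x i < x j" and pos: "\<And>i. i \<le> M \<Longrightarrow> 0 < x i"
    and alternation: "\<And>i. i \<le> M \<Longrightarrow> poly p (x i) = (-1) ^ i"
    and "degree p \<le> M" "degree q \<le> M" and q_bounded: "\<And>i. i \<le> M \<Longrightarrow> \<bar>poly q (x i)\<bar> \<le> 1"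
  shows "poly q 0 \<le> poly p 0"
proof -
  have inj: "inj_on x {0..M}"
    using increasing by (intro inj_onI) (metis atLeastAtMost_iff linorder_neqE_nat less_irrefl)
  define w where "w i = poly (lagrange_basis x M i) 0" for i
  \<comment> \<open>the Lagrange weights at \<open>0\<close> alternate in sign exactly like the values of \<open>p\<close>\<close>
  have abs_w: "\<bar>w i\<bar> = (-1) ^ i * w i" if "i \<le> M" for i
  proof -
    have "(-1) ^ i * w i > 0"
      unfolding w_def using increasing pos that by (rule lagrange_basis_at_0_sign)
    moreover have "\<bar>(-1) ^ i * w i\<bar> = \<bar>w i\<bar>"
      by (simp add: abs_mult)
    ultimately show ?thesis
      by simp
  qed
  have "poly q 0 = (\<Sum>i=0..M. poly q (x i) * w i)"
    unfolding w_def by (rule lagrange_interpolation[OF inj \<open>degree q \<le> M\<close>])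
  also have "\<dots> \<le> (\<Sum>i=0..M. (-1) ^ i * w i)"
  proof (rule sum_mono)
    fix i assume "i \<in> {0..M}"
    then have "i \<le> M"
      by simp
    have "poly q (x i) * w i \<le> \<bar>poly q (x i)\<bar> * \<bar>w i\<bar>"
      by (metis abs_ge_self abs_mult)
    also have "\<dots> \<le> \<bar>w i\<bar>"
      using q_bounded[OF \<open>i \<le> M\<close>] by (simp add: mult_left_le_one_le)
    finally show "poly q (x i) * w i \<le> (-1) ^ i * w i"
      using abs_w[OF \<open>i \<le> M\<close>] by simp
  qed
  also have "\<dots> = (\<Sum>i=0..M. poly p (x i) * w i)"
    using alternation by (intro sum.cong) auto
  also have "\<dots> = poly p 0"
    unfolding w_def by (rule lagrange_interpolation[OF inj \<open>degree p \<le> M\<close>, symmetric])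
  finally show ?thesis .
qed

section \<open>Sufficiency of equal lengths\<close>

definition two_interval_map :: "real \<Rightarrow> real \<Rightarrow> real \<Rightarrow> real poly" where
  "two_interval_map c h R = smult (2 / (R\<^sup>2 - h\<^sup>2)) ([:-c, 1:]\<^sup>2 - [:h\<^sup>2:]) - 1"

lemma poly_two_interval_map:
  "poly (two_interval_map c h R) x = 2 / (R\<^sup>2 - h\<^sup>2) * ((x - c)\<^sup>2 - h\<^sup>2) - 1"
proof -
  have "poly (smult a ([:-c, 1:]\<^sup>2 - [:h\<^sup>2:]) - 1) x = a * ((x - c)\<^sup>2 - h\<^sup>2) - 1" for a
    by (simp add: power2_eq_square algebra_simps)
  then show ?thesis
    unfolding two_interval_map_def .
qed

lemma degree_two_interval_map:
  assumes "h\<^sup>2 \<noteq> R\<^sup>2"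
  shows "degree (two_interval_map c h R) = 2"
proof -
  define a where "a = 2 / (R\<^sup>2 - h\<^sup>2)"
  have "a \<noteq> 0"
    unfolding a_def using assms by simp
  have "smult a ([:-c, 1:]\<^sup>2 - [:h\<^sup>2:]) - 1 = [:a * (c\<^sup>2 - h\<^sup>2) - 1, -2 * a * c, a:]"
    by (rule poly_ext) (simp add: power2_eq_square algebra_simps)
  then have "two_interval_map c h R = [:a * (c\<^sup>2 - h\<^sup>2) - 1, -2 * a * c, a:]"
    unfolding two_interval_map_def a_def .
  with \<open>a \<noteq> 0\<close> show ?thesis
    by simp
qed

lemma two_interval_map_bounded:
  assumes "0 \<le> h" "h < R" "x \<in> {c-R..c-h} \<union> {c+h..c+R}"
  shows "\<bar>poly (two_interval_map c h R) x\<bar> \<le> 1"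
proof -
  have "h \<le> \<bar>x - c\<bar>" "\<bar>x - c\<bar> \<le> R"
    using assms by auto
  then have "h\<^sup>2 \<le> (x - c)\<^sup>2" "(x - c)\<^sup>2 \<le> R\<^sup>2"
    using \<open>0 \<le> h\<close> abs_le_square_iff[of h "x - c"] abs_le_square_iff[of "x - c" R] by auto
  moreover have "R\<^sup>2 - h\<^sup>2 > 0"
    using assms(1,2) by (simp add: power_strict_mono)
  ultimately show ?thesis
    by (simp add: poly_two_interval_map abs_le_iff divide_le_eq le_divide_eq)
qed

definition two_interval_radius :: "real \<Rightarrow> real \<Rightarrow> real \<Rightarrow> real" where
  "two_interval_radius h R y = sqrt (h\<^sup>2 + (1 + y) * (R\<^sup>2 - h\<^sup>2) / 2)"

lemma two_interval_map_preimage: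
  assumes "0 \<le> h" "h < R" "\<bar>y\<bar> \<le> 1"
  shows "h \<le> two_interval_radius h R y" "two_interval_radius h R y \<le> R"
    "poly (two_interval_map c h R) (c - two_interval_radius h R y) = y"
    "poly (two_interval_map c h R) (c + two_interval_radius h R y) = y"
proof -
  define s where "s = two_interval_radius h R y"
  have "R\<^sup>2 - h\<^sup>2 > 0"
    using assms(1,2) by (simp add: power_strict_mono)
  have "0 \<le> 1 + y" "1 + y \<le> 2"
    using assms(3) by auto
  have "(1 + y) * (R\<^sup>2 - h\<^sup>2) \<le> 2 * (R\<^sup>2 - h\<^sup>2)"
    using \<open>1 + y \<le> 2\<close> \<open>R\<^sup>2 - h\<^sup>2 > 0\<close> by (intro mult_right_mono) auto
  moreover have "0 \<le> (1 + y) * (R\<^sup>2 - h\<^sup>2)"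
    using \<open>0 \<le> 1 + y\<close> \<open>R\<^sup>2 - h\<^sup>2 > 0\<close> by simp
  ultimately have "h\<^sup>2 \<le> h\<^sup>2 + (1 + y) * (R\<^sup>2 - h\<^sup>2) / 2" "h\<^sup>2 + (1 + y) * (R\<^sup>2 - h\<^sup>2) / 2 \<le> R\<^sup>2"
    by (simp_all add: field_simps)
  then have "sqrt (h\<^sup>2) \<le> s" "s \<le> sqrt (R\<^sup>2)" "s\<^sup>2 = h\<^sup>2 + (1 + y) * (R\<^sup>2 - h\<^sup>2) / 2"
    unfolding s_def two_interval_radius_def by (auto intro: real_sqrt_le_mono simp del: real_sqrt_abs)
  with assms(1,2) \<open>R\<^sup>2 - h\<^sup>2 > 0\<close> show "h \<le> two_interval_radius h R y" "two_interval_radius h R y \<le> R"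
    "poly (two_interval_map c h R) (c - two_interval_radius h R y) = y"
    "poly (two_interval_map c h R) (c + two_interval_radius h R y) = y"
    by (simp_all add: poly_two_interval_map power2_commute[of c s] add_divide_distrib flip: s_def)
qed

lemma two_interval_radius_strict_mono:
  assumes "0 \<le> h" "h < R" "y < y'"
  shows "two_interval_radius h R y < two_interval_radius h R y'"
proof -
  have "R\<^sup>2 - h\<^sup>2 > 0"
    using assms(1,2) by (simp add: power_strict_mono)
  with assms(3) show ?thesis
    unfolding two_interval_radius_def by (simp add: divide_strict_right_mono)
qed

lemma two_interval_map_alternation_nodes:
  assumes "0 < h" "h < R" "n \<ge> 1"
  obtains x where "\<And>i j. i < j \<Longrightarrow> j \<le> 2 * n \<Longrightarrow> x i < x j"
    "\<And>i. i \<le> 2 * n \<Longrightarrow> x i \<in> {c-R..c-h} \<union> {c+h..c+R}"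
    "\<And>i. i \<le> 2 * n \<Longrightarrow> poly (two_interval_map c h R) (x i) = cos (real i * pi / real n)"
proof -
  define s where "s k = two_interval_radius h R (cos (real k * pi / real n))" for k
  have s_bounds: "h \<le> s k" "s k \<le> R"
    and s_values: "poly (two_interval_map c h R) (c - s k) = cos (real k * pi / real n)"
      "poly (two_interval_map c h R) (c + s k) = cos (real k * pi / real n)" for k
    unfolding s_def using two_interval_map_preimage assms(1,2) abs_cos_le_one by auto
  have s_decreasing: "s l < s k" if "k < l" "l \<le> n" for k l
    unfolding s_def using assms(1,2) cos_multiple_pi_div_strict_antimono[OF that]
    by (intro two_interval_radius_strict_mono) auto
  \<comment> \<open>preimages of the extremal points \<open>cos (i \<pi> / n)\<close> of \<open>T\<^sub>n\<close>, in the left interval for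
      \<open>i \<le> n\<close> and in the right one for \<open>i > n\<close>\<close>
  define x where "x i = (if i \<le> n then c - s i else c + s (2 * n - i))" for i
  show ?thesis
  proof
    fix i j assume "i < j" "j \<le> 2 * n"
    then consider "j \<le> n" | "i \<le> n" "n < j" | "n < i"
      by linarith
    then show "x i < x j"
    proof cases
      case 1
      then show ?thesis
        using s_decreasing[OF \<open>i < j\<close>] \<open>i < j\<close> unfolding x_def by simp
    next
      case 2
      then show ?thesis
        using s_bounds[of i] s_bounds[of "2 * n - j"] \<open>0 < h\<close> unfolding x_def by simp
    next
      case 3
      then show ?thesis
        using s_decreasing[of "2 * n - j" "2 * n - i"] \<open>i < j\<close> \<open>j \<le> 2 * n\<close> unfolding x_def by simp
    qed
  next
    fix i
    show "x i \<in> {c-R..c-h} \<union> {c+h..c+R}"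
      using s_bounds[of i] s_bounds[of "2 * n - i"] unfolding x_def by auto
  next
    fix i assume "i \<le> 2 * n"
    then show "poly (two_interval_map c h R) (x i) = cos (real i * pi / real n)"
      unfolding x_def using s_values cos_multiple_pi_div_reflect[OF _ assms(3)] by auto
  qed
qed

lemma cheb_compose_two_interval_map_solves_max:
  assumes "0 < h" "h < R" "R < c" "n \<ge> 1"
  shows "solves_max ({c-R..c-h} \<union> {c+h..c+R}) (2 * n) (pcompose (cheb_T n) (two_interval_map c h R))"
proof -
  define S where "S = {c-R..c-h} \<union> {c+h..c+R}"
  define p where "p = pcompose (cheb_T n) (two_interval_map c h R)"
  have "h\<^sup>2 \<noteq> R\<^sup>2"
    using assms(1,2) power_strict_mono[of h R 2] by simp
  then have "degree p \<le> 2 * n"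
    unfolding p_def using degree_cheb_T_le[of n] by (simp add: degree_pcompose degree_two_interval_map)
  moreover have "\<bar>poly p x\<bar> \<le> 1" if "x \<in> S" for x
    unfolding p_def poly_pcompose using two_interval_map_bounded assms(1,2) that
    by (simp add: S_def abs_poly_cheb_T_le_1)
  ultimately have "feasible S (2 * n) p"
    unfolding feasible_def by blast
  obtain x where increasing: "\<And>i j. i < j \<Longrightarrow> j \<le> 2 * n \<Longrightarrow> x i < x j"
    and nodes: "\<And>i. i \<le> 2 * n \<Longrightarrow> x i \<in> S"
    and node_values: "\<And>i. i \<le> 2 * n \<Longrightarrow> poly (two_interval_map c h R) (x i) = cos (real i * pi / real n)"
    using two_interval_map_alternation_nodes[OF assms(1,2,4)] unfolding S_def by blast
  have "poly p (x i) = (-1) ^ i" if "i \<le> 2 * n" for i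
  proof -
    have "poly p (x i) = cos (real n * (real i * pi / real n))"
      unfolding p_def poly_pcompose node_values[OF that] by (rule poly_cheb_T_cos)
    also have "\<dots> = (-1) ^ i"
      using assms(4) by simp
    finally show ?thesis .
  qed
  moreover have "0 < x i" if "i \<le> 2 * n" for i
    using nodes[OF that] assms(1-3) unfolding S_def by auto
  ultimately have "poly q 0 \<le> poly p 0" if "feasible S (2 * n) q" for q
    using that increasing nodes \<open>degree p \<le> 2 * n\<close> unfolding feasible_def
    by (intro poly_0_le_if_alternation[of "2 * n" x]) auto
  with \<open>feasible S (2 * n) p\<close> show ?thesis
    unfolding solves_max_def S_def p_def by blast
qed

lemma cheb_compose_optimal_if_equal_gaps:
  fixes \<mu>1 L1 \<mu>2 L2 :: real
  assumes "0 < \<mu>1" "\<mu>1 < L1" "L1 < \<mu>2" "\<mu>2 < L2" and "L1 - \<mu>1 = L2 - \<mu>2"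
  shows "\<exists>\<sigma> :: real poly. degree \<sigma> = 2
            \<and> poly \<sigma> ` ({\<mu>1..L1} \<union> {\<mu>2..L2}) \<subseteq> {-1..1}
            \<and> (\<forall>n\<ge>1. solves_max ({\<mu>1..L1} \<union> {\<mu>2..L2}) (2 * n) (pcompose (cheb_T n) \<sigma>))"
proof -
  define c h R where "c = (L1 + \<mu>2) / 2" and "h = (\<mu>2 - L1) / 2" and "R = L2 - (L1 + \<mu>2) / 2"
  have "0 < h" "h < R" "R < c"
    using assms unfolding c_def h_def R_def by (simp_all add: field_simps)
  moreover from this have "h\<^sup>2 \<noteq> R\<^sup>2"
    using power_strict_mono[of h R 2] by simp
  moreover have "c - R = \<mu>1" "c - h = L1" "c + h = \<mu>2" "c + R = L2"
    using assms(5) unfolding c_def h_def R_def by (simp_all add: field_simps)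
  ultimately show ?thesis
    using degree_two_interval_map two_interval_map_bounded cheb_compose_two_interval_map_solves_max
    by (intro exI[of _ "two_interval_map c h R"]) (auto simp: abs_le_iff)
qed

theorem mainTheorem13:
  fixes \<mu>1 L1 \<mu>2 L2 :: real
  assumes "0 < \<mu>1" "\<mu>1 < L1" "L1 < \<mu>2" "\<mu>2 < L2"
  shows "(\<exists>\<sigma> :: real poly. degree \<sigma> = 2
            \<and> poly \<sigma> ` ({\<mu>1..L1} \<union> {\<mu>2..L2}) \<subseteq> {-1..1}
            \<and> (\<forall>n\<ge>1. solves_max ({\<mu>1..L1} \<union> {\<mu>2..L2}) (2 * n) (pcompose (cheb_T n) \<sigma>)))
         \<longleftrightarrow> L1 - \<mu>1 = L2 - \<mu>2"
  using equal_gaps_if_cheb_compose_optimal[OF assms] cheb_compose_optimal_if_equal_gaps[OF assms]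
  by blast

end
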